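(* Let $S \subset \mathbb{R}^2$ be compact such that both $S$ and $S^\mathsf{c}$ satisfy the $r$-rolling condition, and let $\mathcal{X}_n=\{X_1,\ldots,X_n\}$ be independent and uniformly distributed on $S$. For any $\alpha>0$, there is a constant $A > 0$ depending only on $(\alpha,r,\operatorname{diam}(S))$ such that, for every $n\ge1$, with probability at least $1 - A e^{- n/A}$ there is no open ball of radius $\alpha$ with center in $S$ that contains no point of $\mathcal{X}_n$.
   Context: A set $T\subset\mathbb{R}^2$ satisfies the $r$-rolling condition ($r>0$) if for every $x \in \partial T$ there is an open ball $B$ of radius $r$ with $B \cap T = \emptyset$ and $x \in \partial B$. $S^\mathsf{c}=\mathbb{R}^2\setminus S$, $\operatorname{diam}(S)=\sup\{\|x-y\|:x,y\in S\}$. *)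

theory Defs
  imports "HOL-Probability.Probability"
begin

definition rolling_condition :: "real \<Rightarrow> (real^2) set \<Rightarrow> bool" where
  "rolling_condition r T \<longleftrightarrow>
     (\<forall>x\<in>frontier T. \<exists>c. ball c r \<inter> T = {} \<and> x \<in> frontier (ball c r))"

definition uniform_sample :: "(real^2) set \<Rightarrow> nat \<Rightarrow> (nat \<Rightarrow> real^2) measure" where
  "uniform_sample S n = PiM {..<n} (\<lambda>_. uniform_measure lborel S)"

end

theory Submission
  imports Defs
begin

text \<open>Only the rolling condition of the complement is needed: it puts a ball of radius
  \<open>min r (\<beta>/4)\<close> inside \<open>S \<inter> ball c \<beta>\<close> for every \<open>c \<in> S\<close>. Since \<open>S\<close> lies in a ball of
  radius \<open>diam S\<close>, every ball of radius \<open>\<beta> = \<alpha>/2\<close> centred in \<open>S\<close> therefore has uniform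
  probability at least a constant \<open>q > 0\<close> depending only on \<open>(\<alpha>, r, diam S)\<close>. A grid
  yields a \<open>\<beta>\<close>-net of \<open>S\<close> inside \<open>S\<close> whose size \<open>N\<close> depends only on \<open>\<alpha>\<close> and \<open>diam S\<close>;
  if every \<open>\<beta>\<close>-ball around a net point contains a sample point, then so does every
  \<open>\<alpha>\<close>-ball centred in \<open>S\<close>. A union bound over the net bounds the failure probability
  by \<open>N (1 - q)\<^sup>n \<le> N exp (-q n)\<close>.\<close>

lemma rolling_complement_ball_inside:
  fixes S :: "(real^2) set"
  assumes roll: "rolling_condition r (- S)" and "r > 0" "\<beta> > 0" and "c \<in> S"
  shows "\<exists>w. ball w (min r (\<beta>/4)) \<subseteq> S \<inter> ball c \<beta>"
proof (cases "ball c (\<beta>/2) \<subseteq> S")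
  case True
  moreover have "ball c (min r (\<beta>/4)) \<subseteq> ball c (\<beta>/2)"
    using \<open>\<beta> > 0\<close> by (intro subset_ball) linarith
  ultimately show ?thesis using \<open>\<beta> > 0\<close> by (intro exI[of _ c]) auto
next
  case False
  have "ball c (\<beta>/2) \<inter> frontier S \<noteq> {}"
  proof (rule connected_Int_frontier)
    show "ball c (\<beta>/2) \<inter> S \<noteq> {}" using \<open>c \<in> S\<close> \<open>\<beta> > 0\<close> by (metis centre_in_ball disjoint_iff half_gt_zero)
  qed (use False in auto)
  then obtain y where y: "y \<in> ball c (\<beta>/2)" "y \<in> frontier S" by auto
  then obtain z where z: "ball z r \<inter> - S = {}" "y \<in> frontier (ball z r)"
    using roll unfolding rolling_condition_def by auto
  have dzy: "dist z y = r" using z(2) \<open>r > 0\<close> by auto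
  define \<rho> where "\<rho> = min r (\<beta>/4)"
  have \<rho>: "0 < \<rho>" "\<rho> \<le> r" "\<rho> \<le> \<beta>/4" using \<open>r > 0\<close> \<open>\<beta> > 0\<close> by (auto simp: \<rho>_def)
  \<comment> \<open>The ball of radius \<open>\<rho>\<close> inside \<open>ball z r\<close> that is tangent to it at \<open>y\<close>.\<close>
  define w where "w = y + (\<rho>/r) *\<^sub>R (z - y)"
  have "w - z = (1 - \<rho>/r) *\<^sub>R (y - z)" by (simp add: w_def algebra_simps)
  then have "dist w z = \<bar>1 - \<rho>/r\<bar> * r" using dzy by (simp add: dist_norm norm_minus_commute)
  also have "\<bar>1 - \<rho>/r\<bar> * r = r - \<rho>"
    using \<rho> \<open>r > 0\<close> by (simp add: abs_of_nonneg left_diff_distrib)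
  finally have dwz: "dist w z = r - \<rho>" .
  have dwy: "dist w y = \<rho>"
    using dzy \<rho> \<open>r > 0\<close> by (simp add: w_def dist_norm dist_commute)
  have "ball w \<rho> \<subseteq> ball z r"
    using dwz by (simp add: ball_subset_ball_iff dist_commute)
  then have "ball w \<rho> \<subseteq> S" using z(1) by blast
  moreover have "ball w \<rho> \<subseteq> ball c \<beta>"
  proof
    fix x assume "x \<in> ball w \<rho>"
    then show "x \<in> ball c \<beta>"
      using dwy y(1) \<rho> dist_triangle[of c x w] dist_triangle[of c w y] by (simp add: dist_commute)
  qed
  ultimately show ?thesis unfolding \<rho>_def by blast
qed

lemma emeasure_rolling_nonzero:
  fixes S :: "(real^2) set"
  assumes "compact S" "S \<noteq> {}" "rolling_condition r (- S)" "r > 0"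
  shows "emeasure lborel S \<noteq> 0"
proof -
  obtain c where "c \<in> S" using \<open>S \<noteq> {}\<close> by blast
  then obtain w where w: "ball w (min r (1/4)) \<subseteq> S"
    using rolling_complement_ball_inside[OF assms(3,4) zero_less_one] by blast
  have "0 < measure lborel (ball w (min r (1/4)))"
    using \<open>r > 0\<close> by (simp add: content_ball_pos)
  also have "\<dots> \<le> measure lborel S"
    using w \<open>compact S\<close> by (intro measure_mono_fmeasurable) (auto simp: fmeasurable_compact)
  finally show ?thesis by (auto simp: measure_def)
qed

lemma uniform_measure_ball_rolling_ge:
  fixes S :: "(real^2) set"
  assumes S: "compact S" "rolling_condition r (- S)" "diameter S \<le> D"
    and "r > 0" "\<beta> > 0" "c \<in> S"
  shows "measure lborel (ball (0::real^2) (min r (\<beta>/4))) / measure lborel (cball (0::real^2) D)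
           \<le> measure (uniform_measure lborel S) (ball c \<beta>)"
proof -
  let ?\<rho> = "min r (\<beta>/4)"
  obtain w where w: "ball w ?\<rho> \<subseteq> S \<inter> ball c \<beta>"
    using rolling_complement_ball_inside[OF S(2) \<open>r > 0\<close> \<open>\<beta> > 0\<close> \<open>c \<in> S\<close>] by blast
  have fS: "S \<in> fmeasurable lborel" using S(1) by (simp add: fmeasurable_compact)
  have "measure lborel (ball (0::real^2) ?\<rho>) = measure lborel (ball w ?\<rho>)"
    using \<open>r > 0\<close> \<open>\<beta> > 0\<close> by (simp add: content_ball)
  also have "\<dots> \<le> measure lborel (S \<inter> ball c \<beta>)"
    using w fS by (intro measure_mono_fmeasurable fmeasurable_Int_fmeasurable) auto
  finally have inner: "measure lborel (ball (0::real^2) ?\<rho>) \<le> measure lborel (S \<inter> ball c \<beta>)" .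
  have "S \<subseteq> cball c D"
    using diameter_bounded_bound[OF compact_imp_bounded[OF S(1)] \<open>c \<in> S\<close>] S(3)
    by (force simp: mem_cball)
  then have "measure lborel S \<le> measure lborel (cball c D)"
    using S(1) by (intro measure_mono_fmeasurable) (auto simp: fmeasurable_compact borel_compact)
  also have "\<dots> = measure lborel (cball (0::real^2) D)"
    by (cases "D \<ge> 0") (simp_all add: content_cball)
  finally have outer: "measure lborel S \<le> measure lborel (cball (0::real^2) D)" .
  have "0 < measure lborel (ball (0::real^2) ?\<rho>)"
    using \<open>r > 0\<close> \<open>\<beta> > 0\<close> by (simp add: content_ball_pos)
  moreover have "measure lborel (S \<inter> ball c \<beta>) \<le> measure lborel S"
    using fS by (intro measure_mono_fmeasurable fmeasurable_Int_fmeasurable) auto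
  ultimately have "measure lborel (ball (0::real^2) ?\<rho>) / measure lborel (cball (0::real^2) D)
      \<le> measure lborel (S \<inter> ball c \<beta>) / measure lborel S"
    using inner outer by (intro frac_le) linarith+
  also have "\<dots> = measure (uniform_measure lborel S) (ball c \<beta>)"
    using emeasure_rolling_nonzero[OF S(1) _ S(2) \<open>r > 0\<close>] \<open>c \<in> S\<close> fS
    by (intro measure_uniform_measure[symmetric]) (auto simp: fmeasurable_def)
  finally show ?thesis .
qed

lemma dist_floor_grid_point:
  fixes c s :: "real^'n" and \<delta> :: real
  assumes "\<delta> > 0"
  shows "dist c (\<chi> j. s$j + \<delta> * \<lfloor>(c$j - s$j) / \<delta>\<rfloor>) < CARD('n) * \<delta>"
proof -
  let ?g = "\<chi> j. s$j + \<delta> * \<lfloor>(c$j - s$j) / \<delta>\<rfloor>"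
  have "\<bar>(c - ?g)$j\<bar> < \<delta>" for j
  proof -
    let ?t = "(c$j - s$j) / \<delta>"
    have "(c - ?g)$j = \<delta> * (?t - \<lfloor>?t\<rfloor>)" using assms by (simp add: field_simps)
    moreover have "0 \<le> ?t - \<lfloor>?t\<rfloor>" "?t - \<lfloor>?t\<rfloor> < 1" by linarith+
    ultimately show ?thesis using assms by (simp add: abs_mult)
  qed
  then have "(\<Sum>j\<in>UNIV. \<bar>(c - ?g)$j\<bar>) < (\<Sum>j\<in>(UNIV::'n set). \<delta>)"
    by (intro sum_strict_mono) auto
  then show ?thesis
    using norm_le_l1_cart[of "c - ?g"] by (simp add: dist_norm)
qed

lemma cart_bounded_finite_net:
  fixes D \<epsilon> :: real
  assumes "\<epsilon> > 0"
  obtains N :: nat where "\<And>(S :: (real^'n) set) s. S \<subseteq> cball s D \<Longrightarrow>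
    \<exists>C\<subseteq>S. finite C \<and> card C \<le> N \<and> (\<forall>c\<in>S. \<exists>x\<in>C. dist c x < \<epsilon>)"
proof
  define \<delta> where "\<delta> = \<epsilon> / (2 * CARD('n))"
  define M where "M = \<lceil>D / \<delta>\<rceil>"
  define K where "K = Pi\<^sub>E (UNIV :: 'n set) (\<lambda>_. {-M..M})"
  have \<delta>: "\<delta> > 0" using assms by (simp add: \<delta>_def)
  fix S :: "(real^'n) set" and s assume S: "S \<subseteq> cball s D"
  define g where "g k = (\<chi> j. s$j + \<delta> * k j)" for k :: "'n \<Rightarrow> int"
  define idx where "idx c = (\<lambda>j. \<lfloor>(c$j - s$j) / \<delta>\<rfloor>)" for c :: "real^'n"
  define pick where "pick k = (SOME x. x \<in> S \<and> dist (g k) x < \<epsilon>/2)" for k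
  have near: "dist c (g (idx c)) < \<epsilon>/2" for c
    using dist_floor_grid_point[OF \<delta>, of c s] by (simp add: g_def idx_def \<delta>_def)
  have pick: "pick (idx c) \<in> S \<and> dist (g (idx c)) (pick (idx c)) < \<epsilon>/2" if "c \<in> S" for c
    unfolding pick_def by (rule someI[of _ c]) (use that near in \<open>simp add: dist_commute\<close>)
  have "idx c \<in> K" if "c \<in> S" for c
  proof -
    have bnd: "-D / \<delta> \<le> (c$j - s$j) / \<delta> \<and> (c$j - s$j) / \<delta> \<le> D / \<delta>" for j
    proof -
      have "\<bar>c$j - s$j\<bar> \<le> D"
        using component_le_norm_cart[of "c - s" j] S that by (auto simp: dist_norm norm_minus_commute)
      then show ?thesis
        using \<delta> divide_right_mono[of "-D" "c$j - s$j" \<delta>] divide_right_mono[of "c$j - s$j" D \<delta>]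
        by (auto simp: abs_le_iff)
    qed
    have "idx c j \<in> {-M..M}" for j
      using bnd[of j] le_of_int_ceiling[of "D / \<delta>"]
      unfolding idx_def M_def atLeastAtMost_iff le_floor_iff floor_le_iff by simp linarith
    then show ?thesis by (auto simp: K_def PiE_def)
  qed
  then have "idx ` S \<subseteq> K" by blast
  moreover have "finite K" by (simp add: K_def finite_PiE)
  ultimately have "finite (idx ` S)" "card (idx ` S) \<le> card K"
    by (auto intro: finite_subset card_mono)
  then have "finite (pick ` idx ` S)" "card (pick ` idx ` S) \<le> card K"
    using card_image_le[of "idx ` S" pick] by auto
  moreover have "pick ` idx ` S \<subseteq> S" using pick by blast
  moreover have "\<exists>x\<in>pick ` idx ` S. dist c x < \<epsilon>" if "c \<in> S" for c
    using pick[OF that] near[of c] dist_triangle[of c "pick (idx c)" "g (idx c)"] that by force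
  ultimately show "\<exists>C\<subseteq>S. finite C \<and> card C \<le> card K \<and> (\<forall>c\<in>S. \<exists>x\<in>C. dist c x < \<epsilon>)"
    by blast
qed

lemma PiM_all_notin_eq_PiE:
  "{X \<in> space (PiM {..<n} (\<lambda>_. M)). \<forall>i<n. X i \<notin> B} = Pi\<^sub>E {..<n} (\<lambda>_. space M - B)"
  by (auto simp: space_PiM PiE_def Pi_def)

lemma measure_PiM_all_notin:
  fixes M :: "'a measure"
  assumes "prob_space M" and B: "B \<in> sets M"
  shows "measure (PiM {..<n} (\<lambda>_. M)) {X \<in> space (PiM {..<n} (\<lambda>_. M)). \<forall>i<n. X i \<notin> B}
           = (1 - measure M B) ^ n"
proof -
  interpret M: prob_space M by fact
  interpret P: finite_product_prob_space "\<lambda>_. M" "{..<n}"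
    by unfold_locales auto
  have "measure (PiM {..<n} (\<lambda>_. M)) {X \<in> space (PiM {..<n} (\<lambda>_. M)). \<forall>i<n. X i \<notin> B}
      = measure (PiM {..<n} (\<lambda>_. M)) (Pi\<^sub>E {..<n} (\<lambda>_. space M - B))"
    unfolding PiM_all_notin_eq_PiE ..
  also have "\<dots> = (\<Prod>i<n. measure M (space M - B))"
    using B by (intro P.finite_measure_PiM_emb) auto
  finally show ?thesis
    using M.prob_compl[OF B] by simp
qed


lemma prob_PiM_hits_all:
  fixes M :: "'a measure" and \<B> :: "'a set set"
  assumes M: "prob_space M" and fin: "finite \<B>"
    and \<B>: "\<And>B. B \<in> \<B> \<Longrightarrow> B \<in> sets M \<and> q \<le> measure M B"
  shows "1 - real (card \<B>) * exp (- q * real n)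
           \<le> measure (PiM {..<n} (\<lambda>_. M)) {X \<in> space (PiM {..<n} (\<lambda>_. M)). \<forall>B\<in>\<B>. \<exists>i<n. X i \<in> B}"
proof (cases "\<B> = {}")
  case True
  interpret prob_space "PiM {..<n} (\<lambda>_. M)" using M by (rule prob_space_PiM)
  show ?thesis using True prob_space by simp
next
  case False
  let ?P = "PiM {..<n} (\<lambda>_. M)"
  let ?miss = "\<lambda>B. {X \<in> space ?P. \<forall>i<n. X i \<notin> B}"
  interpret P: prob_space ?P using M by (rule prob_space_PiM)
  have miss_sets: "?miss B \<in> P.events" if "B \<in> \<B>" for B
    unfolding PiM_all_notin_eq_PiE using \<B>[OF that] by (intro sets_PiM_I_finite) auto
  have q_le_1: "q \<le> 1"
  proof -
    obtain B where "B \<in> \<B>" using False by blast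
    then show ?thesis using \<B> prob_space.prob_le_1[OF M, of B] by fastforce
  qed
  have miss_prob: "P.prob (?miss B) \<le> exp (- q * real n)" if "B \<in> \<B>" for B
  proof -
    have "P.prob (?miss B) = (1 - measure M B) ^ n"
      using \<B>[OF that] by (intro measure_PiM_all_notin M) auto
    also have "\<dots> \<le> (1 - q) ^ n"
      using \<B>[OF that] prob_space.prob_le_1[OF M] by (intro power_mono) auto
    also have "\<dots> \<le> exp (- q) ^ n"
      using q_le_1 exp_ge_add_one_self[of "- q"] by (intro power_mono) auto
    also have "\<dots> = exp (- q * real n)"
      by (metis exp_of_nat_mult mult.commute)
    finally show ?thesis .
  qed
  have "{X \<in> space ?P. \<forall>B\<in>\<B>. \<exists>i<n. X i \<in> B} = space ?P - (\<Union>B\<in>\<B>. ?miss B)"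
    by blast
  also have "P.prob \<dots> = 1 - P.prob (\<Union>B\<in>\<B>. ?miss B)"
    by (intro P.prob_compl sets.finite_UN fin miss_sets)
  finally have "P.prob {X \<in> space ?P. \<forall>B\<in>\<B>. \<exists>i<n. X i \<in> B} = 1 - P.prob (\<Union>B\<in>\<B>. ?miss B)" .
  moreover have "P.prob (\<Union>B\<in>\<B>. ?miss B) \<le> (\<Sum>B\<in>\<B>. P.prob (?miss B))"
    by (intro P.finite_measure_subadditive_finite fin image_subsetI miss_sets)
  moreover have "(\<Sum>B\<in>\<B>. P.prob (?miss B)) \<le> (\<Sum>B\<in>\<B>. exp (- q * real n))"
    using miss_prob by (rule sum_mono)
  ultimately show ?thesis by simp
qed

lemma compact_covered_by_balls_iff_dense:
  fixes S T :: "'a::euclidean_space set" and x :: "'i \<Rightarrow> 'a"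
  assumes "compact S" "T \<subseteq> S" "S \<subseteq> closure T"
  shows "(\<forall>c\<in>S. \<exists>i\<in>I. dist c (x i) < \<alpha>)
     \<longleftrightarrow> (\<exists>m. \<forall>d\<in>T. \<exists>i\<in>I. dist (x i) d \<le> \<alpha> - 1 / Suc m)"
proof
  assume "\<forall>c\<in>S. \<exists>i\<in>I. dist c (x i) < \<alpha>"
  then have "S \<subseteq> \<Union> ((\<lambda>i. ball (x i) \<alpha>) ` I)"
    by (auto simp: dist_commute)
  from Heine_Borel_lemma[OF \<open>compact S\<close> this]
  obtain e where e: "e > 0" "\<And>c. c \<in> S \<Longrightarrow> \<exists>i\<in>I. ball c e \<subseteq> ball (x i) \<alpha>"
    by auto
  obtain m where m: "1 / Suc m < e"
    using reals_Archimedean[OF e(1)] by (auto simp: inverse_eq_divide)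
  have "\<exists>i\<in>I. dist (x i) d \<le> \<alpha> - 1 / Suc m" if "d \<in> T" for d
  proof -
    from that assms(2) have "d \<in> S" by blast
    then obtain i where "i \<in> I" "ball d e \<subseteq> ball (x i) \<alpha>" using e(2) by blast
    then have "dist d (x i) + e \<le> \<alpha>" using e(1) ball_subset_ball_iff[of d e "x i" \<alpha>] by simp
    then show ?thesis using \<open>i \<in> I\<close> m dist_commute[of d "x i"] by force
  qed
  then show "\<exists>m. \<forall>d\<in>T. \<exists>i\<in>I. dist (x i) d \<le> \<alpha> - 1 / Suc m" by blast
next
  assume "\<exists>m. \<forall>d\<in>T. \<exists>i\<in>I. dist (x i) d \<le> \<alpha> - 1 / Suc m"
  then obtain m where m: "\<forall>d\<in>T. \<exists>i\<in>I. dist (x i) d \<le> \<alpha> - 1 / Suc m" by blast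
  show "\<forall>c\<in>S. \<exists>i\<in>I. dist c (x i) < \<alpha>"
  proof
    fix c assume "c \<in> S"
    with assms(3) have "c \<in> closure T" by blast
    then obtain d where d: "d \<in> T" "dist d c < 1 / Suc m"
      unfolding closure_approachable by (meson of_nat_0_less_iff zero_less_Suc zero_less_divide_1_iff)
    with m obtain i where "i \<in> I" "dist (x i) d \<le> \<alpha> - 1 / Suc m" by blast
    moreover have "dist c (x i) \<le> dist d c + dist (x i) d"
      using dist_triangle[of c "x i" d] by (simp add: dist_commute)
    ultimately show "\<exists>i\<in>I. dist c (x i) < \<alpha>" using d(2) by force
  qed
qed

lemma sets_PiM_covering_event:
  fixes M :: "'a::euclidean_space measure" and S :: "'a set"
  assumes M: "sets M = sets borel" and "compact S" "finite I"
  shows "{X \<in> space (PiM I (\<lambda>_. M)). \<forall>c\<in>S. \<exists>i\<in>I. dist c (X i) < \<alpha>} \<in> sets (PiM I (\<lambda>_. M))"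
proof -
  let ?P = "PiM I (\<lambda>_. M)"
  obtain T where T: "countable T" "T \<subseteq> S" "S \<subseteq> closure T" using separable by blast
  have "{X \<in> space ?P. dist (X i) d \<le> t} \<in> sets ?P" if "i \<in> I" for i d t
  proof (rule sets_Collect_single'[OF that])
    have "{x \<in> space M. dist x d \<le> t} = cball d t"
      using sets_eq_imp_space_eq[OF M] by (auto simp: dist_commute)
    then show "{x \<in> space M. dist x d \<le> t} \<in> sets M" using M by simp
  qed
  then have "{X \<in> space ?P. \<forall>d\<in>T. \<exists>i\<in>I. dist (X i) d \<le> \<alpha> - 1 / Suc m} \<in> sets ?P" for m
    using T(1) \<open>finite I\<close>
    by (intro sets.sets_Collect_countable_All' sets.sets_Collect_finite_Ex) auto
  then have "{X \<in> space ?P. \<exists>m. \<forall>d\<in>T. \<exists>i\<in>I. dist (X i) d \<le> \<alpha> - 1 / Suc m} \<in> sets ?P"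
    by (intro sets.sets_Collect_countable_Ex) auto
  then show ?thesis
    by (subst compact_covered_by_balls_iff_dense[OF \<open>compact S\<close> T(2,3)])
qed

lemma prob_PiM_covering_from_net:
  fixes M :: "'a::euclidean_space measure"
  assumes M: "prob_space M" "sets M = sets borel" and "compact S" "finite C"
    and net: "\<forall>c\<in>S. \<exists>x\<in>C. dist c x < \<beta>"
    and q: "\<And>x. x \<in> C \<Longrightarrow> q \<le> measure M (ball x \<beta>)"
  shows "1 - real (card C) * exp (- q * real n)
           \<le> measure (PiM {..<n} (\<lambda>_. M))
                {X \<in> space (PiM {..<n} (\<lambda>_. M)). \<forall>c\<in>S. \<exists>i<n. X i \<in> ball c (2 * \<beta>)}"
proof -
  let ?P = "PiM {..<n} (\<lambda>_. M)"
  let ?hit = "{X \<in> space ?P. \<forall>B\<in>(\<lambda>x. ball x \<beta>) ` C. \<exists>i<n. X i \<in> B}"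
  let ?good = "{X \<in> space ?P. \<forall>c\<in>S. \<exists>i<n. X i \<in> ball c (2 * \<beta>)}"
  interpret P: prob_space ?P using M(1) by (rule prob_space_PiM)
  have "1 - real (card C) * exp (- q * real n)
      \<le> 1 - real (card ((\<lambda>x. ball x \<beta>) ` C)) * exp (- q * real n)"
    using card_image_le[OF \<open>finite C\<close>, of "\<lambda>x. ball x \<beta>"] by simp
  also have "\<dots> \<le> measure ?P ?hit"
    using \<open>finite C\<close> q M(2) by (intro prob_PiM_hits_all M(1)) auto
  also have "\<dots> \<le> measure ?P ?good"
  proof (rule P.finite_measure_mono)
    show "?good \<in> P.events"
      using sets_PiM_covering_event[OF M(2) \<open>compact S\<close>, of "{..<n}" "2 * \<beta>"]
      by (simp add: mem_ball Bex_def)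
    show "?hit \<subseteq> ?good"
    proof safe
      fix X c assume hit: "\<forall>B\<in>(\<lambda>x. ball x \<beta>) ` C. \<exists>i<n. X i \<in> B" and "c \<in> S"
      then obtain x where "x \<in> C" "dist c x < \<beta>" using net by blast
      with hit obtain i where "i < n" "dist x (X i) < \<beta>" by auto
      then show "\<exists>i<n. X i \<in> ball c (2 * \<beta>)"
        using \<open>dist c x < \<beta>\<close> dist_triangle[of c "X i" x] by auto
    qed
  qed
  finally show ?thesis .
qed

lemma mult_exp_decay_le:
  fixes N q A n :: real
  assumes "0 \<le> N" "N < A" "0 < q" "1 / q < A" "0 \<le> n"
  shows "N * exp (- q * n) \<le> A * exp (- n / A)"
proof (rule mult_mono)
  have "A > 0" using assms(1,2) by linarith
  with assms(3,4) have "1 / A \<le> q" by (simp add: field_simps)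
  then have "n / A \<le> q * n" using \<open>0 \<le> n\<close> mult_right_mono[of "1 / A" q n] by simp
  then show "exp (- q * n) \<le> exp (- n / A)" by simp
qed (use assms in auto)

theorem proposition1:
  fixes \<alpha> r D :: real
  assumes "\<alpha> > 0" and "r > 0"
  shows "\<exists>A>0. \<forall>S :: (real^2) set.
           compact S \<and> S \<noteq> {} \<and> rolling_condition r S \<and> rolling_condition r (- S)
           \<and> diameter S = D \<longrightarrow>
           (\<forall>n\<ge>1. measure (uniform_sample S n)
                     {X \<in> space (uniform_sample S n).
                        \<forall>c\<in>S. \<exists>i<n. X i \<in> ball c \<alpha>}
                   \<ge> 1 - A * exp (- real n / A))"
proof -
  define \<beta> where "\<beta> = \<alpha> / 2"
  have "\<beta> > 0" using \<open>\<alpha> > 0\<close> by (simp add: \<beta>_def)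
  \<comment> \<open>The radius \<open>max 1 D\<close> rather than \<open>D\<close> keeps the denominator, and hence \<open>q\<close>, positive.\<close>
  define q where "q = measure lborel (ball (0::real^2) (min r (\<beta>/4)))
                      / measure lborel (cball (0::real^2) (max 1 D))"
  have "q > 0" using \<open>r > 0\<close> \<open>\<beta> > 0\<close> by (simp add: q_def content_ball_pos content_cball_pos)
  obtain N where net: "\<And>(S :: (real^2) set) s. S \<subseteq> cball s D \<Longrightarrow>
      \<exists>C\<subseteq>S. finite C \<and> card C \<le> N \<and> (\<forall>c\<in>S. \<exists>x\<in>C. dist c x < \<beta>)"
    using cart_bounded_finite_net[OF \<open>\<beta> > 0\<close>] by blast
  define A where "A = max (real N) (1 / q) + 1"
  have "A > 0" by (simp add: A_def max_def)
  show ?thesis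
  proof (intro exI[of _ A] conjI allI impI \<open>A > 0\<close>)
    fix S :: "(real^2) set" and n :: nat
    assume "compact S \<and> S \<noteq> {} \<and> rolling_condition r S \<and> rolling_condition r (- S) \<and> diameter S = D"
    then have S: "compact S" "S \<noteq> {}" "rolling_condition r (- S)" "diameter S = D" by auto
    obtain s where "s \<in> S" using S(2) by blast
    then have "S \<subseteq> cball s D"
      using diameter_bounded_bound[OF compact_imp_bounded[OF S(1)] \<open>s \<in> S\<close>] S(4) by (auto simp: mem_cball)
    then obtain C where C: "C \<subseteq> S" "finite C" "card C \<le> N" "\<forall>c\<in>S. \<exists>x\<in>C. dist c x < \<beta>"
      using net[OF \<open>S \<subseteq> cball s D\<close>] by blast
    have U: "prob_space (uniform_measure lborel S)"
      using emeasure_rolling_nonzero[OF S(1-3) \<open>r > 0\<close>] emeasure_bounded_finite[OF compact_imp_bounded[OF S(1)]]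
      by (intro prob_space_uniform_measure) auto
    have "q \<le> measure (uniform_measure lborel S) (ball x \<beta>)" if "x \<in> C" for x
      using uniform_measure_ball_rolling_ge[OF S(1,3) _ \<open>r > 0\<close> \<open>\<beta> > 0\<close>, of "max 1 D" x] S(4) C(1) that
      by (auto simp: q_def)
    then have "1 - real (card C) * exp (- q * real n)
        \<le> measure (uniform_sample S n) {X \<in> space (uniform_sample S n). \<forall>c\<in>S. \<exists>i<n. X i \<in> ball c \<alpha>}"
      using prob_PiM_covering_from_net[OF U _ S(1) C(2,4)]
      by (simp add: uniform_sample_def \<beta>_def)
    moreover have "real (card C) * exp (- q * real n) \<le> A * exp (- real n / A)"
      using C(3) \<open>q > 0\<close> by (intro mult_exp_decay_le) (auto simp: A_def)
    ultimately show "1 - A * exp (- real n / A)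
        \<le> measure (uniform_sample S n) {X \<in> space (uniform_sample S n). \<forall>c\<in>S. \<exists>i<n. X i \<in> ball c \<alpha>}"
      by linarith
  qed
qed

end
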